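(* Let $\Gamma$ be a typing environment, $e$ an application term, $B$ a base type and $b$ a ground base type. If $\Gamma\vdash e \Rightarrow B$ (concrete algorithmic inference) and $b\sqsubseteq B$, then $\Gamma\vdash e : b$ (declarative typing).
   Context: Fix a set of type constructors, each with a fixed arity, and an infinite set of type variables. Base types are $B ::= \tau \mid C\,B_1\ldots B_k$; ground base types $b$ contain no type variables. Types are $T ::= B\mid B\to T$; ground types $t ::= b \mid b\to t$. A polytype is $\forall\tau_1\ldots\tau_n.T$. A component library $\Lambda$ is a finite map from component names $c$ to polytypes; the arity of $c$ is the number of arrows in $\Lambda(c)$. Substitutions $\sigma$ map type variables to base types (identity elsewhere). A bottom type $\bot$ is added; $\mathbf{B}_\bot$ = base types $\cup\{\bot\}$. $T'\sqsubseteq T$ iff $T'=\sigma T$ for some $\sigma$; $\bot\sqsubseteq B$ for all $B$; $\equiv$ is mutual $\sqsubseteq$. The bottom substitution $\sigma_\bot$ sends every type to $\bot$, and every substitution maps $\bot$ to $\bot$. $\mathrm{mgu}$ denotes the most general (simultaneous) unifier of a sequence of pairs of types, which is $\sigma_\bot$ if no proper unifier exists and the identity for the empty sequence. $\mathrm{fresh}(\forall\bar\tau.T)$ renames $\bar\tau$ to fresh variables. Type transformer: if $\mathrm{fresh}(\Lambda(c))=B'_1\to\cdots\to B'_m\to B'$ then $[\![c]\!](B_1,\ldots,B_m)=\sigma B'$ with $\sigma=\mathrm{mgu}(B_1,B'_1;\ldots;B_m,B'_m)$. Terms (in $\eta$-long form): application terms $e ::= x \mid c(e_1,\ldots,e_m)$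 with $m$ the arity of $c$; normal-form terms $E ::= e\mid \lambda x.E$. A typing environment $\Gamma$ maps variables to ground base types. Declarative typing $\Gamma\vdash E:t$ ($t$ ground): (Var) if $\Gamma(x)=b$ then $\Gamma\vdash x:b$; (App) if $\Lambda(c)=\forall\bar\tau.T$, $\sigma T=b_1\to\cdots\to b_m\to b$ is ground and $\Gamma\vdash e_i:b_i$ for all $i$, then $\Gamma\vdash c(e_1,\ldots,e_m):b$; (Fun) if $\Gamma,x{:}b\vdash E:t$ then $\Gamma\vdash\lambda x.E : b\to t$. Concrete algorithmic inference $\Gamma\vdash e\Rightarrow B$: if $\Gamma(x)=b$ then $\Gamma\vdash x\Rightarrow b$; if $\Gamma\vdash e_i\Rightarrow B_i$ for all $i$ then $\Gamma\vdash c(e_1,\ldots,e_m)\Rightarrow [\![c]\!](B_1,\ldots,B_m)$. *)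

theory Defs
  imports Main
begin

text \<open>Type variables are natural numbers; type constructors range over an arbitrary
  type 'c, each with a fixed arity given by a function ar :: 'c => nat.\<close>

type_synonym tvar = nat

datatype 'c btype = TV tvar | TC 'c "'c btype list"

fun tvars :: "'c btype \<Rightarrow> tvar set" where
  "tvars (TV v) = {v}"
| "tvars (TC c bs) = (\<Union>b\<in>set bs. tvars b)"

definition ground :: "'c btype \<Rightarrow> bool" where
  "ground b \<longleftrightarrow> tvars b = {}"

fun wfb :: "('c \<Rightarrow> nat) \<Rightarrow> 'c btype \<Rightarrow> bool" where
  "wfb ar (TV v) = True"
| "wfb ar (TC c bs) = (length bs = ar c \<and> (\<forall>b\<in>set bs. wfb ar b))"

text \<open>A type B1 -> ... -> Bm -> B is represented as the pair ([B1,...,Bm], B).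
  A polytype quantifies over all type variables of its body, so it is represented by its body.\<close>
type_synonym 'c ty = "'c btype list \<times> 'c btype"

text \<open>Base types extended with bottom: None is the bottom type.\<close>
type_synonym 'c bbtype = "'c btype option"

type_synonym 'c subst = "tvar \<Rightarrow> 'c btype"

fun subst :: "'c subst \<Rightarrow> 'c btype \<Rightarrow> 'c btype" where
  "subst \<sigma> (TV v) = \<sigma> v"
| "subst \<sigma> (TC c bs) = TC c (map (subst \<sigma>) bs)"

definition is_subst :: "('c \<Rightarrow> nat) \<Rightarrow> 'c subst \<Rightarrow> bool" where
  "is_subst ar \<sigma> \<longleftrightarrow> (\<forall>v. wfb ar (\<sigma> v))"

text \<open>Extended substitutions: None is the bottom substitution; every substitution maps
  bottom to bottom.\<close>
fun app_subst :: "'c subst option \<Rightarrow> 'c bbtype \<Rightarrow> 'c bbtype" where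
  "app_subst None _ = None"
| "app_subst (Some \<sigma>) None = None"
| "app_subst (Some \<sigma>) (Some B) = Some (subst \<sigma> B)"

definition inst_le :: "('c \<Rightarrow> nat) \<Rightarrow> 'c bbtype \<Rightarrow> 'c bbtype \<Rightarrow> bool" where
  "inst_le ar T' T \<longleftrightarrow> T' = None \<or> (\<exists>\<sigma>. is_subst ar \<sigma> \<and> T' = app_subst (Some \<sigma>) T)"

definition is_unifier :: "('c \<Rightarrow> nat) \<Rightarrow> ('c bbtype \<times> 'c bbtype) list \<Rightarrow> 'c subst \<Rightarrow> bool" where
  "is_unifier ar ps \<sigma> \<longleftrightarrow> is_subst ar \<sigma> \<and>
     (\<forall>(x, y)\<in>set ps. app_subst (Some \<sigma>) x = app_subst (Some \<sigma>) y)"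

definition is_mgu :: "('c \<Rightarrow> nat) \<Rightarrow> ('c bbtype \<times> 'c bbtype) list \<Rightarrow> 'c subst \<Rightarrow> bool" where
  "is_mgu ar ps \<sigma> \<longleftrightarrow> is_unifier ar ps \<sigma> \<and>
     (\<forall>\<theta>. is_unifier ar ps \<theta> \<longrightarrow> (\<exists>\<delta>. is_subst ar \<delta> \<and> (\<forall>v. \<theta> v = subst \<delta> (\<sigma> v))))"

definition mgu :: "('c \<Rightarrow> nat) \<Rightarrow> ('c bbtype \<times> 'c bbtype) list \<Rightarrow> 'c subst option" where
  "mgu ar ps = (if ps = [] then Some TV
     else if \<exists>\<sigma>. is_unifier ar ps \<sigma> then Some (SOME \<sigma>. is_mgu ar ps \<sigma>) else None)"

type_synonym ('n, 'c) library = "'n \<Rightarrow> 'c ty option"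

definition wf_library :: "('c \<Rightarrow> nat) \<Rightarrow> ('n, 'c) library \<Rightarrow> bool" where
  "wf_library ar \<Lambda> \<longleftrightarrow> finite (dom \<Lambda>) \<and>
     (\<forall>c args res. \<Lambda> c = Some (args, res) \<longrightarrow> (\<forall>B\<in>set (res # args). wfb ar B))"

definition ty_tvars :: "'c ty \<Rightarrow> tvar set" where
  "ty_tvars T = (\<Union>B\<in>set (snd T # fst T). tvars B)"

definition rename_ty :: "(tvar \<Rightarrow> tvar) \<Rightarrow> 'c ty \<Rightarrow> 'c ty" where
  "rename_ty \<rho> T = (map (subst (TV \<circ> \<rho>)) (fst T), subst (TV \<circ> \<rho>) (snd T))"

text \<open>The type transformer [[c]](B1,...,Bm): the polytype of c is renamed apart
  (injectively) from the type variables of the arguments, then the mgu is applied.\<close>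
definition type_transformer ::
  "('c \<Rightarrow> nat) \<Rightarrow> ('n, 'c) library \<Rightarrow> 'n \<Rightarrow> 'c bbtype list \<Rightarrow> 'c bbtype" where
  "type_transformer ar \<Lambda> c Bs = (case \<Lambda> c of None \<Rightarrow> None
     | Some T \<Rightarrow>
        (let \<rho> = (SOME \<rho>. inj \<rho> \<and>
                    \<rho> ` ty_tvars T \<inter> (\<Union>B\<in>set Bs. case B of None \<Rightarrow> {} | Some B \<Rightarrow> tvars B) = {});
             (args', res') = rename_ty \<rho> T
         in app_subst (mgu ar (zip Bs (map Some args'))) (Some res')))"

datatype ('n, 'v) aterm = Var 'v | App 'n "('n, 'v) aterm list"

datatype ('n, 'v) nterm = ATerm "('n, 'v) aterm" | Lam 'v "('n, 'v) nterm"

type_synonym ('v, 'c) env = "'v \<Rightarrow> 'c btype option"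

definition wf_env :: "('c \<Rightarrow> nat) \<Rightarrow> ('v, 'c) env \<Rightarrow> bool" where
  "wf_env ar \<Gamma> \<longleftrightarrow> (\<forall>x b. \<Gamma> x = Some b \<longrightarrow> ground b \<and> wfb ar b)"

inductive decl_typing :: "('c \<Rightarrow> nat) \<Rightarrow> ('n, 'c) library \<Rightarrow> ('v, 'c) env \<Rightarrow> ('n, 'v) aterm \<Rightarrow> 'c btype \<Rightarrow> bool"
  for ar \<Lambda> \<Gamma> where
  DVar: "\<Gamma> x = Some b \<Longrightarrow> decl_typing ar \<Lambda> \<Gamma> (Var x) b"
| DApp: "\<lbrakk> \<Lambda> c = Some (args, res); is_subst ar \<sigma>; length es = length args;
           \<forall>B\<in>set (res # args). ground (subst \<sigma> B);
           list_all2 (decl_typing ar \<Lambda> \<Gamma>) es (map (subst \<sigma>) args) \<rbrakk>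
         \<Longrightarrow> decl_typing ar \<Lambda> \<Gamma> (App c es) (subst \<sigma> res)"

inductive decl_typing_nf :: "('c \<Rightarrow> nat) \<Rightarrow> ('n, 'c) library \<Rightarrow> ('v, 'c) env \<Rightarrow> ('n, 'v) nterm \<Rightarrow> 'c ty \<Rightarrow> bool"
  for ar \<Lambda> where
  DAT: "decl_typing ar \<Lambda> \<Gamma> e b \<Longrightarrow> decl_typing_nf ar \<Lambda> \<Gamma> (ATerm e) ([], b)"
| DFun: "\<lbrakk> ground b; wfb ar b; decl_typing_nf ar \<Lambda> (\<Gamma>(x \<mapsto> b)) E (bs, r) \<rbrakk>
         \<Longrightarrow> decl_typing_nf ar \<Lambda> \<Gamma> (Lam x E) (b # bs, r)"

inductive infer :: "('c \<Rightarrow> nat) \<Rightarrow> ('n, 'c) library \<Rightarrow> ('v, 'c) env \<Rightarrow> ('n, 'v) aterm \<Rightarrow> 'c bbtype \<Rightarrow> bool"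
  for ar \<Lambda> \<Gamma> where
  IVar: "\<Gamma> x = Some b \<Longrightarrow> infer ar \<Lambda> \<Gamma> (Var x) (Some b)"
| IApp: "\<lbrakk> \<Lambda> c = Some (args, res); length es = length args;
           list_all2 (infer ar \<Lambda> \<Gamma>) es Bs \<rbrakk>
         \<Longrightarrow> infer ar \<Lambda> \<Gamma> (App c es) (type_transformer ar \<Lambda> c Bs)"

end

theory Submission
  imports Defs
begin

text \<open>A variable is typed by its ground type,
  which is its only instance. For an application, the inferred type is \<open>\<sigma>\<^sub>0 B'\<close> for an mgu
  \<open>\<sigma>\<^sub>0\<close> of the argument types with the renamed parameter types \<open>B'\<^sub>i\<close>; composing \<open>\<sigma>\<^sub>0\<close>
  with the substitution witnessing \<open>b \<sqsubseteq> \<sigma>\<^sub>0 B'\<close> and then grounding all remaining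
  variables gives a ground instance of the component's polytype whose result is \<open>b\<close> and whose
  parameters are instances of the inferred argument types, so the induction hypotheses apply.
  The substantial ingredient is that \<open>mgu\<close>, defined by choice, really returns a unifier, i.e.
  that most general unifiers exist; this follows by running Robinson's transformations.\<close>

lemma subst_subst: "subst \<sigma> (subst \<tau> t) = subst (\<lambda>x. subst \<sigma> (\<tau> x)) t"
  by (induction t) auto

lemma subst_cong: "(\<And>x. x \<in> tvars t \<Longrightarrow> \<sigma> x = \<tau> x) \<Longrightarrow> subst \<sigma> t = subst \<tau> t"
  by (induction t) auto

lemma subst_TV [simp]: "subst TV t = t"
  by (induction t) (auto simp: map_idI)

lemma subst_ground: "ground t \<Longrightarrow> subst \<sigma> t = t"
  by (metis subst_TV subst_cong empty_iff ground_def)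

lemma ground_subst: "(\<And>x. ground (\<sigma> x)) \<Longrightarrow> ground (subst \<sigma> t)"
  by (induction t) (auto simp: ground_def)

lemma wfb_subst: "wfb ar t \<Longrightarrow> (\<And>x. wfb ar (\<sigma> x)) \<Longrightarrow> wfb ar (subst \<sigma> t)"
  by (induction t) auto

lemma wfb_subst_imp_wfb: "wfb ar (subst \<sigma> t) \<Longrightarrow> wfb ar t"
  by (induction t) auto

lemma finite_tvars [simp]: "finite (tvars t)"
  by (induction t) auto

fun tsize :: "'c btype \<Rightarrow> nat" where
  "tsize (TV v) = 1"
| "tsize (TC c bs) = 1 + sum_list (map tsize bs)"

lemma tsize_var_le_subst: "v \<in> tvars t \<Longrightarrow> tsize (\<theta> v) \<le> tsize (subst \<theta> t)"
proof (induction t)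
  case (TC c bs)
  then obtain b where b: "b \<in> set bs" "v \<in> tvars b" by auto
  then have "tsize (\<theta> v) \<le> tsize (subst \<theta> b)" using TC by auto
  also have "\<dots> \<le> sum_list (map tsize (map (subst \<theta>) bs))"
    using b(1) by (intro member_le_sum_list) auto
  finally show ?case by simp
qed simp

lemma tsize_var_less_subst:
  assumes "v \<in> tvars t" "t \<noteq> TV v"
  shows "tsize (\<theta> v) < tsize (subst \<theta> t)"
proof -
  obtain c bs where t: "t = TC c bs" using assms by (cases t) auto
  with assms(1) obtain b where b: "b \<in> set bs" "v \<in> tvars b" by auto
  have "tsize (\<theta> v) \<le> tsize (subst \<theta> b)" by (rule tsize_var_le_subst[OF b(2)])
  also have "\<dots> \<le> sum_list (map tsize (map (subst \<theta>) bs))"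
    using b(1) by (intro member_le_sum_list) auto
  finally show ?thesis using t by simp
qed

corollary occurs_check: "\<theta> v = subst \<theta> t \<Longrightarrow> t \<noteq> TV v \<Longrightarrow> v \<notin> tvars t"
  by (metis less_irrefl tsize_var_less_subst)

definition unifies :: "'c subst \<Rightarrow> ('c btype \<times> 'c btype) list \<Rightarrow> bool" where
  "unifies \<sigma> E \<longleftrightarrow> (\<forall>(s, t)\<in>set E. subst \<sigma> s = subst \<sigma> t)"

lemma unifies_Nil [simp]: "unifies \<sigma> []"
  and unifies_Cons [simp]: "unifies \<sigma> ((s, t) # E) \<longleftrightarrow> subst \<sigma> s = subst \<sigma> t \<and> unifies \<sigma> E"
  and unifies_append [simp]: "unifies \<sigma> (E @ F) \<longleftrightarrow> unifies \<sigma> E \<and> unifies \<sigma> F"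
  by (auto simp: unifies_def)

lemma unifies_map_subst:
  "unifies \<theta> (map (map_prod (subst \<rho>) (subst \<rho>)) E) \<longleftrightarrow> unifies (\<lambda>x. subst \<theta> (\<rho> x)) E"
  by (induction E) (auto simp: subst_subst)

lemma unifies_zip:
  "length ss = length ts \<Longrightarrow> unifies \<theta> (zip ss ts) \<longleftrightarrow> map (subst \<theta>) ss = map (subst \<theta>) ts"
  by (induction ss ts rule: list_induct2) auto

text \<open>Unlike the usual notion, every unifier \<open>\<theta>\<close> is required to factor through \<open>\<sigma>\<close> as
  \<open>\<theta> = \<theta> \<circ> \<sigma>\<close>, with \<open>\<theta>\<close> itself as the witness; this is what lets well-formedness of
  \<open>\<theta>\<close> pass to \<open>\<sigma>\<close>.\<close>
definition idem_mgu :: "'c subst \<Rightarrow> ('c btype \<times> 'c btype) list \<Rightarrow> bool" where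
  "idem_mgu \<sigma> E \<longleftrightarrow> unifies \<sigma> E \<and> (\<forall>\<theta>. unifies \<theta> E \<longrightarrow> (\<forall>v. \<theta> v = subst \<theta> (\<sigma> v)))"

lemma idem_mgu_Nil: "idem_mgu TV []"
  by (simp add: idem_mgu_def)

lemma idem_mgu_Cons_trivial: "idem_mgu \<sigma> E \<Longrightarrow> idem_mgu \<sigma> ((t, t) # E)"
  by (simp add: idem_mgu_def)

lemma idem_mgu_Cons_swap: "idem_mgu \<sigma> ((t, s) # E) \<Longrightarrow> idem_mgu \<sigma> ((s, t) # E)"
  by (auto simp: idem_mgu_def)

lemma idem_mgu_Cons_TC:
  "length ss = length ts \<Longrightarrow> idem_mgu \<sigma> (zip ss ts @ E) \<Longrightarrow> idem_mgu \<sigma> ((TC c ss, TC c ts) # E)"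
  by (simp add: idem_mgu_def unifies_zip)

lemma idem_mgu_Cons_TV:
  assumes "v \<notin> tvars u"
    and "idem_mgu \<sigma> (map (map_prod (subst (TV(v := u))) (subst (TV(v := u)))) E)"
  shows "idem_mgu (\<lambda>x. subst \<sigma> ((TV(v := u)) x)) ((TV v, u) # E)"
proof -
  let ?\<rho> = "TV(v := u)"
  let ?E = "map (map_prod (subst ?\<rho>) (subst ?\<rho>)) E"
  have "subst \<sigma> (subst ?\<rho> u) = subst \<sigma> u"
    using assms(1) by (intro arg_cong[where f = "subst \<sigma>"] subst_cong[where \<tau> = TV, simplified]) auto
  then have "unifies (\<lambda>x. subst \<sigma> (?\<rho> x)) ((TV v, u) # E)"
    using assms(2) by (simp add: idem_mgu_def unifies_map_subst subst_subst)
  moreover have "\<theta> x = subst \<theta> (subst \<sigma> (?\<rho> x))"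
    if "unifies \<theta> ((TV v, u) # E)" for \<theta> x
  proof -
    have "(\<lambda>x. subst \<theta> (?\<rho> x)) = \<theta>" using that by auto
    then have "unifies \<theta> ?E" "\<theta> = (\<lambda>y. subst \<theta> (\<sigma> y))"
      using that assms(2) by (auto simp: unifies_map_subst idem_mgu_def)
    then have "subst \<theta> (?\<rho> x) = subst \<theta> (subst \<sigma> (?\<rho> x))"
      by (metis subst_subst)
    with \<open>(\<lambda>x. subst \<theta> (?\<rho> x)) = \<theta>\<close> show ?thesis by metis
  qed
  ultimately show ?thesis by (simp add: idem_mgu_def)
qed

definition eqs_vars :: "('c btype \<times> 'c btype) list \<Rightarrow> tvar set" where
  "eqs_vars E = (\<Union>(s, t)\<in>set E. tvars s \<union> tvars t)"

definition eqs_size :: "('c btype \<times> 'c btype) list \<Rightarrow> nat" where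
  "eqs_size E = sum_list (map (\<lambda>(s, t). tsize s + tsize t) E)"

lemma finite_eqs_vars [simp]: "finite (eqs_vars E)"
  by (auto simp: eqs_vars_def)

lemma eqs_vars_Cons [simp]: "eqs_vars ((s, t) # E) = tvars s \<union> tvars t \<union> eqs_vars E"
  and eqs_size_Cons [simp]: "eqs_size ((s, t) # E) = tsize s + tsize t + eqs_size E"
  by (auto simp: eqs_vars_def eqs_size_def)

lemma eqs_vars_zip_append: "length ss = length ts \<Longrightarrow>
    eqs_vars (zip ss ts @ E) = (\<Union>b\<in>set ss. tvars b) \<union> (\<Union>b\<in>set ts. tvars b) \<union> eqs_vars E"
  and eqs_size_zip_append: "length ss = length ts \<Longrightarrow>
    eqs_size (zip ss ts @ E) = sum_list (map tsize ss) + sum_list (map tsize ts) + eqs_size E"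
  by (induction ss ts rule: list_induct2) (auto simp: eqs_vars_def eqs_size_def)

lemma eqs_vars_eliminate:
  assumes "v \<notin> tvars u"
  shows "eqs_vars (map (map_prod (subst (TV(v := u))) (subst (TV(v := u)))) E)
           \<subseteq> eqs_vars ((TV v, u) # E) - {v}"
proof -
  have "tvars (subst (TV(v := u)) t) \<subseteq> tvars t - {v} \<union> tvars u" for t
    by (induction t) auto
  with assms show ?thesis by (fastforce simp: eqs_vars_def)
qed

text \<open>Deleting a trivial equation or decomposing a constructor equation keeps the variables
  and shrinks the size; eliminating a variable removes it from the equations.\<close>
theorem unifiable_imp_idem_mgu: "unifies \<theta> E \<Longrightarrow> \<exists>\<sigma>. idem_mgu \<sigma> E"
proof (induction E rule: wf_induct[OF wf_measures[of "[\<lambda>E. card (eqs_vars E), eqs_size]"]])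
  case (1 E)
  note IH = 1(1)[rule_format, unfolded measures_def, simplified]
  have eliminate: "\<exists>\<sigma>. idem_mgu \<sigma> ((TV v, u) # E')"
    if "TV v \<noteq> u" "unifies \<theta> ((TV v, u) # E')" "eqs_vars ((TV v, u) # E') = eqs_vars E"
    for v u E'
  proof -
    have "v \<notin> tvars u" using that(1,2) occurs_check[of \<theta> v u] by simp
    let ?E = "map (map_prod (subst (TV(v := u))) (subst (TV(v := u)))) E'"
    have "(\<lambda>x. subst \<theta> ((TV(v := u)) x)) = \<theta>" using that(2) by auto
    then have "unifies \<theta> ?E" using that(2) by (simp add: unifies_map_subst)
    moreover have "card (eqs_vars ?E) < card (eqs_vars E)"
      using eqs_vars_eliminate[OF \<open>v \<notin> tvars u\<close>] that(3)
      by (intro psubset_card_mono) auto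
    ultimately obtain \<sigma> where "idem_mgu \<sigma> ?E" using IH by blast
    then show ?thesis using idem_mgu_Cons_TV[OF \<open>v \<notin> tvars u\<close>] by blast
  qed
  show ?case
  proof (cases E)
    case Nil
    then show ?thesis using idem_mgu_Nil by blast
  next
    case (Cons p E')
    obtain s t where E: "E = (s, t) # E'" using Cons by (cases p) auto
    have st: "subst \<theta> s = subst \<theta> t" and E': "unifies \<theta> E'" using 1(2) E by auto
    consider "s = t" | v where "s = TV v" "s \<noteq> t" | v where "t = TV v" "s \<noteq> t"
      | c ss d ts where "s = TC c ss" "t = TC d ts"
      by (cases s; cases t) auto
    then show ?thesis
    proof cases
      case 1
      have "card (eqs_vars E') \<le> card (eqs_vars E)" using E by (intro card_mono) auto
      moreover have "eqs_size E' < eqs_size E" using E by (cases s) auto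
      ultimately show ?thesis using IH[OF _ E'] E 1 idem_mgu_Cons_trivial by fastforce
    next
      case 2
      then show ?thesis using eliminate 1(2) E by auto
    next
      case 3
      then have "\<exists>\<sigma>. idem_mgu \<sigma> ((t, s) # E')" using eliminate 1(2) E by (auto simp: Un_ac)
      then show ?thesis using E idem_mgu_Cons_swap by blast
    next
      case 4
      then have "c = d" and len: "length ss = length ts"
        using st by (auto dest: map_eq_imp_length_eq)
      let ?E = "zip ss ts @ E'"
      have "eqs_vars ?E = eqs_vars E" and "eqs_size ?E < eqs_size E"
        using E 4 len by (auto simp: eqs_vars_zip_append eqs_size_zip_append)
      moreover have "unifies \<theta> ?E" using st E' 4 len by (simp add: unifies_zip)
      ultimately obtain \<sigma> where "idem_mgu \<sigma> ?E" using IH by fastforce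
      then have "idem_mgu \<sigma> ((TC c ss, TC c ts) # E')" by (rule idem_mgu_Cons_TC[OF len])
      then show ?thesis using E 4 \<open>c = d\<close> by blast
    qed
  qed
qed

fun base_eqs :: "('c bbtype \<times> 'c bbtype) list \<Rightarrow> ('c btype \<times> 'c btype) list" where
  "base_eqs [] = []"
| "base_eqs ((Some s, Some t) # ps) = (s, t) # base_eqs ps"
| "base_eqs (_ # ps) = base_eqs ps"

text \<open>Once some substitution unifies \<open>ps\<close>, no pair has \<open>\<bottom>\<close> on exactly one side, and pairs
  \<open>\<bottom> \<doteq> \<bottom>\<close> impose no constraint.\<close>
lemma unifies_base_eqs:
  assumes "is_unifier ar ps \<theta>\<^sub>0"
  shows "unifies \<theta> (base_eqs ps) \<longleftrightarrow>
         (\<forall>(x, y)\<in>set ps. app_subst (Some \<theta>) x = app_subst (Some \<theta>) y)"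
  using assms
proof (induction ps)
  case (Cons p ps)
  obtain x y where "p = (x, y)" by fastforce
  with Cons show ?case by (cases x; cases y) (auto simp: is_unifier_def)
qed simp

lemma mgu_is_unifier:
  assumes "mgu ar ps = Some \<sigma>"
  shows "is_unifier ar ps \<sigma>"
proof (cases "ps = []")
  case True
  then show ?thesis using assms by (auto simp: mgu_def is_unifier_def is_subst_def)
next
  case False
  then obtain \<theta>\<^sub>0 where \<theta>\<^sub>0: "is_unifier ar ps \<theta>\<^sub>0" and \<sigma>: "\<sigma> = (SOME \<sigma>. is_mgu ar ps \<sigma>)"
    using assms by (auto simp: mgu_def split: if_splits)
  note unifies_iff = unifies_base_eqs[OF \<theta>\<^sub>0]
  have "unifies \<theta>\<^sub>0 (base_eqs ps)" using \<theta>\<^sub>0 by (simp add: unifies_iff is_unifier_def)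
  then obtain \<sigma>\<^sub>1 where \<sigma>\<^sub>1: "idem_mgu \<sigma>\<^sub>1 (base_eqs ps)"
    using unifiable_imp_idem_mgu by blast
  have "wfb ar (\<sigma>\<^sub>1 v)" for v
  proof -
    have "\<theta>\<^sub>0 v = subst \<theta>\<^sub>0 (\<sigma>\<^sub>1 v)"
      using \<sigma>\<^sub>1 \<open>unifies \<theta>\<^sub>0 (base_eqs ps)\<close> by (simp add: idem_mgu_def)
    with \<theta>\<^sub>0 show ?thesis by (metis is_subst_def is_unifier_def wfb_subst_imp_wfb)
  qed
  then have "is_unifier ar ps \<sigma>\<^sub>1"
    using \<sigma>\<^sub>1 by (simp add: is_unifier_def is_subst_def idem_mgu_def unifies_iff[symmetric])
  moreover have "\<exists>\<delta>. is_subst ar \<delta> \<and> (\<forall>v. \<theta> v = subst \<delta> (\<sigma>\<^sub>1 v))"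
    if "is_unifier ar ps \<theta>" for \<theta>
    using that \<sigma>\<^sub>1 by (intro exI[of _ \<theta>]) (simp add: idem_mgu_def is_unifier_def unifies_iff)
  ultimately have "is_mgu ar ps \<sigma>\<^sub>1" by (simp add: is_mgu_def)
  then have "is_mgu ar ps \<sigma>" unfolding \<sigma> by (rule someI[of "is_mgu ar ps"])
  then show ?thesis by (simp add: is_mgu_def)
qed

text \<open>Soundness does not depend on how the polytype is renamed apart.\<close>
lemma type_transformer_renamed:
  assumes "\<Lambda> c = Some (args, res)"
  obtains \<rho> where "type_transformer ar \<Lambda> c Bs =
    app_subst (mgu ar (zip Bs (map (Some \<circ> subst (TV \<circ> \<rho>)) args))) (Some (subst (TV \<circ> \<rho>) res))"
  using assms unfolding type_transformer_def rename_ty_def by (auto simp: Let_def)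

lemma type_transformer_ground_instance:
  assumes "\<Lambda> c = Some (args, res)" and "length Bs = length args"
    and "ground b" and "wfb ar b" and "inst_le ar (Some b) (type_transformer ar \<Lambda> c Bs)"
  obtains \<sigma> where "is_subst ar \<sigma>" and "\<And>v. ground (\<sigma> v)" and "subst \<sigma> res = b"
    and "\<And>i. i < length args \<Longrightarrow> inst_le ar (Some (subst \<sigma> (args ! i))) (Bs ! i)"
proof -
  obtain \<rho> where tt: "type_transformer ar \<Lambda> c Bs =
    app_subst (mgu ar (zip Bs (map (Some \<circ> subst (TV \<circ> \<rho>)) args))) (Some (subst (TV \<circ> \<rho>) res))"
    using assms(1) by (rule type_transformer_renamed)
  obtain \<theta> where \<theta>: "is_subst ar \<theta>" "Some b = app_subst (Some \<theta>) (type_transformer ar \<Lambda> c Bs)"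
    using assms(5) by (auto simp: inst_le_def)
  then obtain \<sigma>\<^sub>0 where mgu: "mgu ar (zip Bs (map (Some \<circ> subst (TV \<circ> \<rho>)) args)) = Some \<sigma>\<^sub>0"
    and b: "b = subst \<theta> (subst \<sigma>\<^sub>0 (subst (TV \<circ> \<rho>) res))"
    unfolding tt by (cases "mgu ar (zip Bs (map (Some \<circ> subst (TV \<circ> \<rho>)) args))") auto
  have unifier: "is_unifier ar (zip Bs (map (Some \<circ> subst (TV \<circ> \<rho>)) args)) \<sigma>\<^sub>0"
    by (rule mgu_is_unifier[OF mgu])
  \<comment> \<open>after instantiating the mgu as prescribed by \<open>\<theta>\<close>, send the leftover variables to \<open>b\<close>\<close>
  define \<tau> where "\<tau> v = subst (\<lambda>_. b) (subst \<theta> (\<sigma>\<^sub>0 v))" for v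
  have \<tau>_subst: "subst \<tau> t = subst (\<lambda>_. b) (subst \<theta> (subst \<sigma>\<^sub>0 t))" for t
    by (simp add: \<tau>_def[abs_def] subst_subst)
  have renamed: "subst (\<lambda>v. \<tau> (\<rho> v)) t = subst \<tau> (subst (TV \<circ> \<rho>) t)" for t
    by (simp add: subst_subst)
  have "is_subst ar \<tau>"
    using unifier \<theta>(1) assms(4) by (auto simp: \<tau>_def is_subst_def is_unifier_def intro!: wfb_subst)
  have "ground (\<tau> v)" for v
    using assms(3) by (auto simp: \<tau>_def intro!: ground_subst)
  show thesis
  proof
    show "is_subst ar (\<lambda>v. \<tau> (\<rho> v))" using \<open>is_subst ar \<tau>\<close> by (simp add: is_subst_def)
    show "ground (\<tau> (\<rho> v))" for v by fact
    show "subst (\<lambda>v. \<tau> (\<rho> v)) res = b"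
      using assms(3) by (simp add: renamed \<tau>_subst b[symmetric] subst_ground)
  next
    fix i assume i: "i < length args"
    then have "(Bs ! i, Some (subst (TV \<circ> \<rho>) (args ! i))) \<in> set (zip Bs (map (Some \<circ> subst (TV \<circ> \<rho>)) args))"
      using assms(2) by (auto simp: in_set_zip)
    then obtain B where "Bs ! i = Some B" "subst \<sigma>\<^sub>0 B = subst \<sigma>\<^sub>0 (subst (TV \<circ> \<rho>) (args ! i))"
      using unifier by (cases "Bs ! i") (auto simp: is_unifier_def)
    then show "inst_le ar (Some (subst (\<lambda>v. \<tau> (\<rho> v)) (args ! i))) (Bs ! i)"
      using \<open>is_subst ar \<tau>\<close> by (auto simp: inst_le_def renamed \<tau>_subst)
  qed
qed

theorem mainTheorem3:
  fixes ar :: "'c \<Rightarrow> nat" and \<Lambda> :: "('n, 'c) library" and \<Gamma> :: "('v, 'c) env"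
    and e :: "('n, 'v) aterm" and B :: "'c bbtype" and b :: "'c btype"
  assumes "wf_library ar \<Lambda>"
    and "wf_env ar \<Gamma>"
    and "ground b" and "wfb ar b"
    and "infer ar \<Lambda> \<Gamma> e B"
    and "inst_le ar (Some b) B"
  shows "decl_typing ar \<Lambda> \<Gamma> e b"
  using assms(5,3,4,6)
proof (induction arbitrary: b rule: infer.induct)
  case (IVar x b')
  then have "ground b'" using assms(2) by (auto simp: wf_env_def)
  with IVar show ?case by (auto simp: inst_le_def subst_ground intro: DVar)
next
  case (IApp c args res es Bs b)
  have len: "length Bs = length args" using IApp(2,3) by (simp add: list_all2_lengthD)
  obtain \<sigma> where \<sigma>: "is_subst ar \<sigma>" "\<And>v. ground (\<sigma> v)" "subst \<sigma> res = b"
    and args: "\<And>i. i < length args \<Longrightarrow> inst_le ar (Some (subst \<sigma> (args ! i))) (Bs ! i)"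
    using type_transformer_ground_instance[OF IApp(1) len IApp(4-6)] by blast
  have wf_args: "\<forall>t\<in>set args. wfb ar t" using assms(1) IApp(1) by (auto simp: wf_library_def)
  have "list_all2 (decl_typing ar \<Lambda> \<Gamma>) es (map (subst \<sigma>) args)"
  proof (rule list_all2_all_nthI)
    fix i assume "i < length es"
    then have "i < length args" and "ground (subst \<sigma> (args ! i))" and "wfb ar (subst \<sigma> (args ! i))"
      using IApp(2) \<sigma>(1,2) wf_args by (auto intro!: ground_subst wfb_subst simp: is_subst_def)
    with list_all2_nthD[OF IApp(3) \<open>i < length es\<close>] args
    show "decl_typing ar \<Lambda> \<Gamma> (es ! i) (map (subst \<sigma>) args ! i)" by simp
  qed (simp add: IApp(2))
  moreover have "\<forall>t\<in>set (res # args). ground (subst \<sigma> t)" using \<sigma>(2) by (simp add: ground_subst)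
  ultimately show ?case using DApp[of \<Lambda> c args res ar \<sigma> es] IApp(1,2) \<sigma>(1,3) by simp
qed

end
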